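(* Let $\mathcal P$ be a 2-reflex orthostack made of three bricks with canonical contact rectangles and signature $\sqcap_i\sqcup_j$ for some types $i,j\in\{1,2,3,4\}$. Then $\mathcal P$ is guarded by a single vertical closed face guard (indeed, by any vertical face of the middle brick).
   Context: A 2-reflex orthostack is an orthogonal polyhedron with no reflex edge parallel to the vertical ($z$) axis all of whose horizontal cross-sections are simply connected; it is a stack of bricks $B_t=R_t\times[z_{t-1},z_t]$, $t=1,\dots,k$ (bottom to top), $z_0<\dots<z_k$, each $R_t$ an axis-parallel rectangle, $R_t\ne R_{t+1}$. The contact rectangle between $B_t$ and $B_{t+1}$ is $(R_t\cap R_{t+1})\times\{z_t\}$; it is canonical if one of $R_t,R_{t+1}$ is strictly contained in the other and their set difference is connected. The type of a canonical contact rectangle is the number $i\in\{1,2,3,4\}$ of sides of the smaller rectangle not contained in the boundary of the larger one. The contact is denoted $\sqcup_i$ if $R_t\subsetneq R_{t+1}$ and $\sqcap_i$ if $R_{t+1}\subsetneq R_t$. The signature is the sequence of these symbols for $t=1,\dots,k-1$, read bottom to top. A point $x$ is visible to $y$ if segment $xy$ does not meet the exterior of the polyhedron; a closed face guard is a face including its boundary; it guards the polyhedron if every point is visible from some point of it. A face is vertical if parallel to the $z$-axis. *)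

theory Defs
  imports "HOL-Analysis.Analysis"
begin

text \<open>Points of 3-space are triples (x, y, z); the z-axis is vertical.\<close>

definition rect :: "real \<Rightarrow> real \<Rightarrow> real \<Rightarrow> real \<Rightarrow> (real \<times> real) set" where
  "rect a b c d = {a..b} \<times> {c..d}"

definition brick :: "(real \<times> real) set \<Rightarrow> real \<Rightarrow> real \<Rightarrow> (real \<times> real \<times> real) set" where
  "brick R z0 z1 = {(x, y, w). (x, y) \<in> R \<and> z0 \<le> w \<and> w \<le> z1}"

definition vertical_faces ::
  "real \<Rightarrow> real \<Rightarrow> real \<Rightarrow> real \<Rightarrow> real \<Rightarrow> real \<Rightarrow> (real \<times> real \<times> real) set set" where
  "vertical_faces a b c d z0 z1 =
     {brick ({a} \<times> {c..d}) z0 z1, brick ({b} \<times> {c..d}) z0 z1,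
      brick ({a..b} \<times> {c}) z0 z1, brick ({a..b} \<times> {d}) z0 z1}"

definition visible :: "(real \<times> real \<times> real) set \<Rightarrow> real \<times> real \<times> real \<Rightarrow> real \<times> real \<times> real \<Rightarrow> bool" where
  "visible P x y \<longleftrightarrow> closed_segment x y \<subseteq> P"

definition guards :: "(real \<times> real \<times> real) set \<Rightarrow> (real \<times> real \<times> real) set \<Rightarrow> bool" where
  "guards P G \<longleftrightarrow> (\<forall>p\<in>P. \<exists>g\<in>G. visible P g p)"

definition canonical_contact :: "(real \<times> real) set \<Rightarrow> (real \<times> real) set \<Rightarrow> bool" where
  "canonical_contact R S \<longleftrightarrow>
     (R \<subset> S \<and> connected (S - R)) \<or> (S \<subset> R \<and> connected (R - S))"

text \<open>Contact symbols: cap (upper rectangle strictly inside lower), cup (lower strictly inside upper).\<close>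
definition cap_contact :: "(real \<times> real) set \<Rightarrow> (real \<times> real) set \<Rightarrow> bool" where
  "cap_contact R S \<longleftrightarrow> S \<subset> R"

definition cup_contact :: "(real \<times> real) set \<Rightarrow> (real \<times> real) set \<Rightarrow> bool" where
  "cup_contact R S \<longleftrightarrow> R \<subset> S"

end

theory Submission
  imports Defs
begin

text \<open>The middle rectangle lies inside both of its neighbours, so the column of a vertical face of
  the middle brick touches each of the three (convex) bricks, and every point of a convex brick is
  seen from any point of it.\<close>

lemma brick_rect_eq: "brick (rect a b c d) z0 z1 = {a..b} \<times> {c..d} \<times> {z0..z1}"
  unfolding brick_def rect_def by auto

lemma convex_brick_rect: "convex (brick (rect a b c d) z0 z1)"
  unfolding brick_rect_eq by (intro convex_Times convex_real_interval)

lemma mem_brickI: "(x, y) \<in> R \<Longrightarrow> z0 \<le> w \<Longrightarrow> w \<le> z1 \<Longrightarrow> (x, y, w) \<in> brick R z0 z1"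
  unfolding brick_def by simp

lemma guards_if_meets_convex_cover:
  assumes "P = \<Union>\<B>"
    and "\<And>B. B \<in> \<B> \<Longrightarrow> convex B"
    and "\<And>B. B \<in> \<B> \<Longrightarrow> G \<inter> B \<noteq> {}"
  shows "guards P G"
  unfolding guards_def
proof
  fix p assume "p \<in> P"
  then obtain B where B: "B \<in> \<B>" "p \<in> B" using assms(1) by blast
  then obtain g where "g \<in> G" "g \<in> B" using assms(3) by blast
  moreover have "closed_segment g p \<subseteq> P"
    using closed_segment_subset[OF \<open>g \<in> B\<close> \<open>p \<in> B\<close> assms(2)[OF B(1)]] B(1) assms(1) by blast
  ultimately show "\<exists>g\<in>G. visible P g p" unfolding visible_def by blast
qed

lemma vertical_face_contains_column:
  assumes "F \<in> vertical_faces a b c d z0 z1" "a \<le> b" "c \<le> d"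
  obtains x y where "(x, y) \<in> rect a b c d" "\<And>w. z0 \<le> w \<Longrightarrow> w \<le> z1 \<Longrightarrow> (x, y, w) \<in> F"
proof -
  have "\<exists>x y. (x, y) \<in> rect a b c d \<and> (\<forall>w. z0 \<le> w \<longrightarrow> w \<le> z1 \<longrightarrow> (x, y, w) \<in> F)"
    using assms(1) unfolding vertical_faces_def
  proof (elim insertE emptyE)
    assume "F = brick ({a} \<times> {c..d}) z0 z1"
    then show ?thesis using assms by (intro exI[of _ a] exI[of _ c]) (auto simp: brick_def rect_def)
  next
    assume "F = brick ({b} \<times> {c..d}) z0 z1"
    then show ?thesis using assms by (intro exI[of _ b] exI[of _ c]) (auto simp: brick_def rect_def)
  next
    assume "F = brick ({a..b} \<times> {c}) z0 z1"
    then show ?thesis using assms by (intro exI[of _ a] exI[of _ c]) (auto simp: brick_def rect_def)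
  next
    assume "F = brick ({a..b} \<times> {d}) z0 z1"
    then show ?thesis using assms by (intro exI[of _ a] exI[of _ d]) (auto simp: brick_def rect_def)
  qed
  then show ?thesis using that by blast
qed

theorem mainTheorem8:
  fixes a b c d z :: "nat \<Rightarrow> real"
    and R :: "nat \<Rightarrow> (real \<times> real) set"
    and P :: "(real \<times> real \<times> real) set"
  assumes rects: "\<forall>t\<in>{1,2,3::nat}. a t < b t \<and> c t < d t"
    and heights: "z 0 < z 1" "z 1 < z 2" "z 2 < z 3"
    and R_def: "\<forall>t. R t = rect (a t) (b t) (c t) (d t)"
    and P_def: "P = brick (R 1) (z 0) (z 1) \<union> brick (R 2) (z 1) (z 2) \<union> brick (R 3) (z 2) (z 3)"
    and canon: "canonical_contact (R 1) (R 2)" "canonical_contact (R 2) (R 3)"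
    and sig: "cap_contact (R 1) (R 2)" "cup_contact (R 2) (R 3)"
  shows "\<forall>F \<in> vertical_faces (a 2) (b 2) (c 2) (d 2) (z 1) (z 2). guards P F"
proof
  fix F assume F: "F \<in> vertical_faces (a 2) (b 2) (c 2) (d 2) (z 1) (z 2)"
  obtain x y where xy: "(x, y) \<in> R 2" and column: "\<And>w. z 1 \<le> w \<Longrightarrow> w \<le> z 2 \<Longrightarrow> (x, y, w) \<in> F"
    using vertical_face_contains_column[OF F] rects R_def by (metis insertI1 insertI2 less_imp_le)
  have "(x, y) \<in> R 1" "(x, y) \<in> R 3"
    using xy sig unfolding cap_contact_def cup_contact_def by auto
  then have "(x, y, z 1) \<in> F \<inter> brick (R 1) (z 0) (z 1)" "(x, y, z 1) \<in> F \<inter> brick (R 2) (z 1) (z 2)"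
    "(x, y, z 2) \<in> F \<inter> brick (R 3) (z 2) (z 3)"
    using xy column heights by (auto intro: mem_brickI)
  then show "guards P F"
    using P_def R_def convex_brick_rect
    by (intro guards_if_meets_convex_cover[of P "{brick (R 1) (z 0) (z 1), brick (R 2) (z 1) (z 2), brick (R 3) (z 2) (z 3)}"]) auto
qed

end
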